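(* In the sparse activation model with $\alpha_1>0$, where coordinate $j$ of an input is nonzero with probability $p_j=j^{-\alpha_1-1}$ independently across coordinates and across samples, the expected number of coordinates $j\ge1$ that are nonzero in at least one of $D$ i.i.d. training samples is asymptotic, as $D\to\infty$, to the scale $$K(D)=\Gamma\!\left(1-\frac{1}{\alpha_1+1}\right)D^{\frac{1}{\alpha_1+1}},$$ where $\Gamma$ is the Gamma function. Moreover, a coordinate that is never activated in the training set carries no information about its associated target weight $w_j$ and hence cannot contribute to the learned predictor, so $K(D)$ sets the scale of the number of coefficients of $\mathbf{w}$ that can be estimated from the data.
   Context: Sparse activation model: an input $\mathbf{x}$ has independent coordinates $x_j$ with $\mathbb{P}(x_j=0)=1-j^{-\alpha_1-1}$ and $\mathbb{P}(x_j=\pm j^{-(\alpha_2+1)/2})=\tfrac12 j^{-\alpha_1-1}$ each, for exponents $\alpha_1,\alpha_2$ with $\alpha_1+\alpha_2+1>0$. The target is $y(\mathbf{x})=\mathbf{w}^\top\mathbf{x}$ for a weight vector $\mathbf{w}$ with i.i.d. entries of variance $1$; the training set consists of $D$ i.i.d. inputs. *)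

theory Defs
  imports "HOL-Probability.Probability" "HOL-Library.Landau_Symbols"
begin

definition act_prob :: "real \<Rightarrow> nat \<Rightarrow> real" where
  "act_prob a1 j = real j powr (- a1 - 1)"

definition prob_active :: "real \<Rightarrow> nat \<Rightarrow> nat \<Rightarrow> real" where
  "prob_active a1 D j =
     measure_pmf.prob (Pi_pmf {..<D} False (\<lambda>_. bernoulli_pmf (act_prob a1 j)))
       {f. \<exists>i<D. f i}"

text \<open>Expected number of coordinates j \<ge> 1 activated at least once in the training set
  (linearity of expectation: sum over j of the indicator probabilities).\<close>
definition expected_active :: "real \<Rightarrow> nat \<Rightarrow> real" where
  "expected_active a1 D = (\<Sum>j. prob_active a1 D (Suc j))"

end

theory Submission
  imports Defs
begin

(* Coordinate j is seen in the training set with probability 1 - (1 - j^(-s))^D, where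
   s = alpha1 + 1 > 1.  Pulling the sum over j back along x = j^(-s), where each interval
   [(j+1)^(-s), j^(-s)] has mass one for the density x^(-1/s-1)/s, the increasing function
   1 - (1 - x)^D shows that the expected count lies within 1 of the integral of
   (1 - (1 - x)^D) x^(-1/s-1)/s over [0,1].  Writing 1 - (1 - x)^D = x * sum_{k<D} (1 - x)^k
   turns this integral into a telescoping sum of Beta integrals with value
   Gamma(1 - 1/s) Gamma(D + 1) / Gamma(D + 1 - 1/s) - 1, and
   Gamma(D + 1) / Gamma(D + 1 - 1/s) ~ D^(1/s). *)

lemma prob_Pi_pmf_bernoulli_ex:
  fixes p :: real
  assumes "0 \<le> p" "p \<le> 1"
  shows "measure_pmf.prob (Pi_pmf {..<D} False (\<lambda>_. bernoulli_pmf p)) {f. \<exists>i<D. f i}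
           = 1 - (1 - p) ^ D"
proof -
  let ?M = "Pi_pmf {..<D} False (\<lambda>_. bernoulli_pmf p)"
  have "{f. \<exists>i<D. f i} = UNIV - Pi {..<D} (\<lambda>_. {False})" by auto
  then have "measure_pmf.prob ?M {f. \<exists>i<D. f i} = 1 - measure_pmf.prob ?M (Pi {..<D} (\<lambda>_. {False}))"
    using measure_pmf.prob_compl[of "Pi {..<D} (\<lambda>_. {False})" ?M] by simp
  also have "measure_pmf.prob ?M (Pi {..<D} (\<lambda>_. {False})) =
      (\<Prod>i<D. measure_pmf.prob (bernoulli_pmf p) {False})"
    by (rule measure_Pi_pmf_Pi) simp
  also have "\<dots> = (1 - p) ^ D" using assms by (simp add: measure_pmf_single)
  finally show ?thesis .
qed

lemma act_prob_le_one:
  assumes "a1 \<ge> -1"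
  shows "act_prob a1 j \<le> 1"
proof (cases "j = 0")
  case False
  then have "act_prob a1 j \<le> real j powr 0"
    unfolding act_prob_def using assms by (intro powr_mono) auto
  with False show ?thesis by simp
qed (simp add: act_prob_def)

lemma prob_active_eq:
  assumes "a1 \<ge> -1"
  shows "prob_active a1 D j = 1 - (1 - act_prob a1 j) ^ D"
proof -
  have "0 \<le> act_prob a1 j" by (simp add: act_prob_def)
  with act_prob_le_one[OF assms] show ?thesis
    unfolding prob_active_def by (rule prob_Pi_pmf_bernoulli_ex[rotated])
qed

lemma has_integral_Beta_nat:
  fixes a :: real
  assumes "a > 0"
  shows "((\<lambda>x. x powr (a - 1) * (1 - x) ^ k) has_integral Beta a (real k + 1)) {0..1}"
proof -
  have "((\<lambda>x. x powr (a - 1) * (1 - x) powr (real k + 1 - 1)) has_integral Beta a (real k + 1)) {0..1}"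
    using assms by (intro has_integral_Beta_real) auto
  then show ?thesis
    by (rule has_integral_spike_finite[of "{1}", rotated 2]) (auto simp: powr_realpow)
qed

lemma sum_Beta_telescope:
  fixes a :: real
  assumes "a > 0"
  shows "(1 - a) * (\<Sum>k<n. Beta a (real k + 1)) = Gamma a * Gamma (real n + 1) / Gamma (real n + a) - 1"
proof (induction n)
  case 0
  show ?case using Gamma_real_pos[OF assms] by simp
next
  case (Suc n)
  define b where "b = real n + a"
  have pos: "b > 0" "Gamma b > 0"
    using assms by (auto simp: b_def)
  have "real n + 1 \<notin> \<int>\<^sub>\<le>\<^sub>0" "b \<notin> \<int>\<^sub>\<le>\<^sub>0"
    using pos by auto
  from this[THEN Gamma_plus1]
  have Gamma_Suc: "Gamma (real (Suc n) + 1) = (real n + 1) * Gamma (real n + 1)"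
    "Gamma (real (Suc n) + a) = b * Gamma b"
    "Beta a (real n + 1) = Gamma a * Gamma (real n + 1) / (b * Gamma b)"
    by (simp_all add: Beta_def b_def add_ac)
  have "(1 - a) * Beta a (real n + 1) = (1 - a) * (Gamma a * Gamma (real n + 1) / (b * Gamma b))"
    by (simp only: Gamma_Suc)
  also have "\<dots> = Gamma a * ((real n + 1) * Gamma (real n + 1)) / (b * Gamma b) - Gamma a * Gamma (real n + 1) / Gamma b"
    using pos by (simp add: divide_simps) (simp add: b_def algebra_simps)
  also have "\<dots> = Gamma a * Gamma (real (Suc n) + 1) / Gamma (real (Suc n) + a) - Gamma a * Gamma (real n + 1) / Gamma b"
    by (simp only: Gamma_Suc)
  finally show ?case using Suc.IH by (simp add: distrib_left b_def)
qed

(* Minus the derivative of x^(-1/s), which up to rounding counts the j >= 1 with j^(-s) >= x. *)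
definition count_density :: "real \<Rightarrow> real \<Rightarrow> real" where
  "count_density s x = x powr (- 1 / s - 1) / s"

lemma has_integral_count_density:
  assumes "0 < p" "p \<le> q"
  shows "(count_density s has_integral (p powr (- 1 / s) - q powr (- 1 / s))) {p..q}"
proof -
  have "(count_density s has_integral (- (q powr (- 1 / s)) - - (p powr (- 1 / s)))) {p..q}"
  proof (rule fundamental_theorem_of_calculus[OF assms(2), where f = "\<lambda>z. - (z powr (- 1 / s))"])
    fix x assume "x \<in> {p..q}"
    then have "x > 0" using assms by auto
    then have "((\<lambda>z. - (z powr (- 1 / s))) has_real_derivative - ((- 1 / s) * x powr (- 1 / s - 1))) (at x)"
      by (intro DERIV_minus has_real_derivative_powr)
    then have "((\<lambda>z. - (z powr (- 1 / s))) has_real_derivative count_density s x) (at x)"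
      by (simp add: count_density_def)
    then show "((\<lambda>z. - (z powr (- 1 / s))) has_vector_derivative count_density s x) (at x within {p..q})"
      unfolding has_real_derivative_iff_has_vector_derivative by (rule has_vector_derivative_at_within)
  qed
  then show ?thesis by (rule has_integral_eq_rhs) simp
qed

lemma count_density_nonneg: "s > 0 \<Longrightarrow> 0 \<le> count_density s x"
  by (simp add: count_density_def)

lemma integral_mono_on_times_count_density_bounds:
  fixes \<phi> :: "real \<Rightarrow> real"
  assumes "s > 0" "mono_on {p..q} \<phi>" "0 < p" "p \<le> q"
    and int: "(\<lambda>x. \<phi> x * count_density s x) integrable_on {p..q}"
  defines "m \<equiv> p powr (- 1 / s) - q powr (- 1 / s)"
  shows "\<phi> p * m \<le> integral {p..q} (\<lambda>x. \<phi> x * count_density s x)"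
    and "integral {p..q} (\<lambda>x. \<phi> x * count_density s x) \<le> \<phi> q * m"
proof -
  have const: "((\<lambda>x. c * count_density s x) has_integral c * m) {p..q}" for c
    unfolding m_def by (intro has_integral_mult_right has_integral_count_density assms)
  have "\<phi> p \<le> \<phi> x" "\<phi> x \<le> \<phi> q" if "x \<in> {p..q}" for x
    using that assms(2) by (auto intro: mono_onD)
  with count_density_nonneg[OF assms(1)]
  have "\<phi> p * count_density s x \<le> \<phi> x * count_density s x"
    "\<phi> x * count_density s x \<le> \<phi> q * count_density s x" if "x \<in> {p..q}" for x
    using that by (auto intro: mult_right_mono)
  from integral_le[OF has_integral_integrable[OF const] int this(1)]
    integral_le[OF int has_integral_integrable[OF const] this(2)]
  show "\<phi> p * m \<le> integral {p..q} (\<lambda>x. \<phi> x * count_density s x)"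
    and "integral {p..q} (\<lambda>x. \<phi> x * count_density s x) \<le> \<phi> q * m"
    by (simp_all only: integral_unique[OF const])
qed

lemma integral_split_decseq:
  fixes u :: "nat \<Rightarrow> real" and f :: "real \<Rightarrow> 'a::banach"
  assumes "decseq u" "f integrable_on {u N..u 0}"
  shows "integral {u N..u 0} f = (\<Sum>j<N. integral {u (Suc j)..u j} f)"
  using assms(2)
proof (induction N)
  case (Suc N)
  have le: "u (Suc N) \<le> u N" "u N \<le> u 0" using \<open>decseq u\<close> by (auto simp: decseqD)
  then have "f integrable_on {u N..u 0}"
    by (intro integrable_subinterval_real[OF Suc.prems]) auto
  moreover have "integral {u (Suc N)..u 0} f = integral {u (Suc N)..u N} f + integral {u N..u 0} f"
    using le Suc.prems by (simp add: Henstock_Kurzweil_Integration.integral_combine)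
  ultimately show ?case using Suc.IH by simp
qed simp

lemma Suc_powr_neg_bounds:
  assumes "s > 0"
  shows "0 < real (Suc j) powr - s" "real (Suc j) powr - s \<le> 1"
proof -
  show "0 < real (Suc j) powr - s" by simp
  have "real (Suc j) powr - s \<le> real (Suc j) powr 0"
    using assms by (intro powr_mono) auto
  then show "real (Suc j) powr - s \<le> 1" by simp
qed

lemma integral_powr_grid_piece_bounds:
  fixes \<phi> :: "real \<Rightarrow> real" and j :: nat
  assumes s: "s > 0" and mono: "mono_on {0..1} \<phi>"
    and int: "(\<lambda>x. \<phi> x * count_density s x) integrable_on {0..1}"
  defines "p \<equiv> real (Suc (Suc j)) powr - s" and "q \<equiv> real (Suc j) powr - s"
  shows "\<phi> p \<le> integral {p..q} (\<lambda>x. \<phi> x * count_density s x)"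
    and "integral {p..q} (\<lambda>x. \<phi> x * count_density s x) \<le> \<phi> q"
proof -
  have "p \<le> q"
    unfolding p_def q_def using s by (intro powr_mono2') auto
  then have pq: "0 < p" "p \<le> q" "q \<le> 1"
    unfolding p_def q_def using Suc_powr_neg_bounds[OF s] by auto
  have "p powr (- 1 / s) - q powr (- 1 / s) = real (Suc (Suc j)) - real (Suc j)"
    unfolding p_def q_def using s by (simp add: powr_powr)
  then have mass: "p powr (- 1 / s) - q powr (- 1 / s) = 1" by simp
  have "mono_on {p..q} \<phi>"
    using pq by (intro mono_on_subset[OF mono]) auto
  moreover have "(\<lambda>x. \<phi> x * count_density s x) integrable_on {p..q}"
    using pq by (intro integrable_subinterval_real[OF int]) auto
  ultimately show "\<phi> p \<le> integral {p..q} (\<lambda>x. \<phi> x * count_density s x)"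
    and "integral {p..q} (\<lambda>x. \<phi> x * count_density s x) \<le> \<phi> q"
    using integral_mono_on_times_count_density_bounds[OF s _ pq(1,2)]
    by (simp_all only: mass mult_1_right)
qed

lemma integral_powr_grid_tail_bounds:
  fixes \<phi> :: "real \<Rightarrow> real" and N :: nat
  assumes s: "s > 0" and mono: "mono_on {0..1} \<phi>"
    and int: "(\<lambda>x. \<phi> x * count_density s x) integrable_on {0..1}"
  defines "J \<equiv> integral {real (Suc N) powr - s..1} (\<lambda>x. \<phi> x * count_density s x)"
  shows "(\<Sum>j<N. \<phi> (real (Suc (Suc j)) powr - s)) \<le> J"
    and "J \<le> (\<Sum>j<N. \<phi> (real (Suc j) powr - s))"
proof -
  define u where "u j = real (Suc j) powr - s" for j
  have "decseq u"
    unfolding u_def using s by (intro decseq_SucI powr_mono2') auto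
  moreover have "(\<lambda>x. \<phi> x * count_density s x) integrable_on {u N..u 0}"
    using Suc_powr_neg_bounds[OF s] by (intro integrable_subinterval_real[OF int]) (auto simp: u_def)
  ultimately have J_split: "J = (\<Sum>j<N. integral {u (Suc j)..u j} (\<lambda>x. \<phi> x * count_density s x))"
    unfolding J_def by (subst integral_split_decseq[symmetric]) (auto simp: u_def)
  have "\<phi> (u (Suc j)) \<le> integral {u (Suc j)..u j} (\<lambda>x. \<phi> x * count_density s x)"
    "integral {u (Suc j)..u j} (\<lambda>x. \<phi> x * count_density s x) \<le> \<phi> (u j)" for j
    unfolding u_def by (rule integral_powr_grid_piece_bounds[OF s mono int])+
  then show "(\<Sum>j<N. \<phi> (real (Suc (Suc j)) powr - s)) \<le> J"
    and "J \<le> (\<Sum>j<N. \<phi> (real (Suc j) powr - s))"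
    unfolding u_def[symmetric] J_split by (auto intro: sum_mono)
qed

lemma tendsto_integral_left_endpoint:
  fixes f :: "real \<Rightarrow> 'a::banach"
  assumes "f integrable_on {a..b}" "u \<longlonglongrightarrow> a" "\<And>n. u n \<in> {a..b}"
  shows "(\<lambda>n. integral {u n..b} f) \<longlonglongrightarrow> integral {a..b} f"
proof -
  have "a \<le> b" using assms(3)[of 0] by auto
  with assms(3) show ?thesis
    by (intro continuous_on_tendsto_compose[OF indefinite_integral_continuous_1'[OF assms(1)] assms(2)])
       (auto intro: always_eventually)
qed

lemma sum_powr_grid_integral_bounds:
  fixes \<phi> :: "real \<Rightarrow> real"
  assumes s: "s > 0" and mono: "mono_on {0..1} \<phi>" and nonneg: "0 \<le> \<phi> 0"
    and I: "((\<lambda>x. \<phi> x * count_density s x) has_integral I) {0..1}"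
  defines "t \<equiv> \<lambda>j. \<phi> (real (Suc j) powr - s)"
  shows "summable t" and "I \<le> suminf t" and "suminf t \<le> \<phi> 1 + I"
proof -
  define u where "u N = real (Suc N) powr - s" for N
  define f where "f = (\<lambda>x. \<phi> x * count_density s x)"
  have u: "u N \<in> {0..1}" for N
    using Suc_powr_neg_bounds[OF s] by (auto simp: u_def less_imp_le)
  have int: "f integrable_on {0..1}" using I unfolding f_def by blast
  note tail = integral_powr_grid_tail_bounds[OF s mono int[unfolded f_def], folded u_def f_def]
  have t_u: "t j = \<phi> (u j)" for j by (simp add: t_def u_def)
  have t_nonneg: "0 \<le> t j" for j
    using u[of j] mono_onD[OF mono, of 0 "u j"] nonneg by (auto simp: t_u)
  have f_nonneg: "0 \<le> f x" if "x \<in> {0..1}" for x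
    using that mono_onD[OF mono, of 0 x] nonneg count_density_nonneg[OF s] by (auto simp: f_def)
  have "integral {u N..1} f \<le> integral {0..1} f" for N
    using u[of N] f_nonneg by (intro integral_subset_le integrable_subinterval_real[OF int] int) auto
  then have tail_le: "integral {u N..1} f \<le> I" for N
    using I by (simp add: f_def integral_unique)
  have partial_le: "(\<Sum>j<N. t j) \<le> \<phi> 1 + I" for N
  proof -
    have "(\<Sum>j<N. t j) \<le> (\<Sum>j<Suc N. t j)" using t_nonneg by simp
    also have "\<dots> = t 0 + (\<Sum>j<N. t (Suc j))" by (rule sum.lessThan_Suc_shift)
    also have "(\<Sum>j<N. t (Suc j)) \<le> integral {u N..1} f" unfolding t_u by (rule tail(1))
    finally show ?thesis using tail_le[of N] by (simp add: t_u u_def)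
  qed
  show "summable t" using t_nonneg partial_le by (rule summableI_nonneg_bounded)
  then show "suminf t \<le> \<phi> 1 + I" using partial_le by (rule suminf_le_const)
  have "integral {u N..1} f \<le> suminf t" for N
  proof -
    have "integral {u N..1} f \<le> (\<Sum>j<N. t j)" unfolding t_u by (rule tail(2))
    also have "\<dots> \<le> suminf t" using \<open>summable t\<close> t_nonneg by (intro sum_le_suminf) auto
    finally show ?thesis .
  qed
  moreover have "u \<longlonglongrightarrow> 0"
    unfolding u_def using s
    by (intro tendsto_neg_powr filterlim_compose[OF filterlim_real_sequentially filterlim_Suc]) simp
  then have "(\<lambda>N. integral {u N..1} f) \<longlonglongrightarrow> I"
    using tendsto_integral_left_endpoint[OF int _ u] I by (simp add: f_def integral_unique)
  ultimately show "I \<le> suminf t" by (intro LIMSEQ_le_const2) auto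
qed

lemma has_integral_activation_count_density:
  fixes s :: real
  assumes "s > 1"
  shows "((\<lambda>x. (1 - (1 - x) ^ D) * count_density s x) has_integral
           Gamma (1 - 1 / s) * Gamma (real D + 1) / Gamma (real D + 1 - 1 / s) - 1) {0..1}"
proof -
  define a where "a = 1 - 1 / s"
  have a: "a > 0" using assms by (simp add: a_def)
  have "((\<lambda>x. (1 - a) * (\<Sum>k<D. x powr (a - 1) * (1 - x) ^ k)) has_integral
          (1 - a) * (\<Sum>k<D. Beta a (real k + 1))) {0..1}"
    by (intro has_integral_mult_right has_integral_sum has_integral_Beta_nat a) auto
  moreover have "(1 - a) * (\<Sum>k<D. x powr (a - 1) * (1 - x) ^ k) = (1 - (1 - x) ^ D) * count_density s x"
    if "x \<in> {0..1}" for x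
  proof (cases "x = 0")
    case False
    with that have "x > 0" by simp
    have density: "(1 - a) * x powr (a - 1) = x * count_density s x"
      using \<open>x > 0\<close> by (simp add: count_density_def a_def powr_mult_base)
    have "(1 - a) * (\<Sum>k<D. x powr (a - 1) * (1 - x) ^ k) =
        (\<Sum>k<D. ((1 - a) * x powr (a - 1)) * (1 - x) ^ k)"
      by (simp add: sum_distrib_left mult.assoc)
    also have "\<dots> = count_density s x * (x * (\<Sum>k<D. (1 - x) ^ k))"
      unfolding density by (simp add: sum_distrib_left mult_ac)
    also have "x * (\<Sum>k<D. (1 - x) ^ k) = 1 - (1 - x) ^ D"
      using one_diff_power_eq[of "1 - x" D] by simp
    finally show ?thesis by simp
  qed (simp add: count_density_def)
  ultimately have "((\<lambda>x. (1 - (1 - x) ^ D) * count_density s x) has_integral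
          (1 - a) * (\<Sum>k<D. Beta a (real k + 1))) {0..1}"
    by (rule has_integral_eq[rotated])
  then show ?thesis
    unfolding sum_Beta_telescope[OF a] by (simp add: a_def add_diff_eq)
qed

lemma Gamma_shift_ratio_asymp_equiv:
  fixes z :: real
  assumes "z \<notin> \<int>\<^sub>\<le>\<^sub>0"
  shows "(\<lambda>n. Gamma (real n + 1 + z) / Gamma (real n + 1)) \<sim>[at_top] (\<lambda>n. real n powr z)"
proof -
  have Gz: "Gamma z \<noteq> 0" using assms by (simp add: Gamma_eq_zero_iff)
  have "(\<lambda>n. Gamma_series z n / Gamma z) \<longlonglongrightarrow> 1"
    using tendsto_divide[OF Gamma_series_LIMSEQ[of z] tendsto_const Gz] Gz by simp
  moreover have "eventually (\<lambda>n. Gamma_series z n / Gamma z =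
      real n powr z / (Gamma (real n + 1 + z) / Gamma (real n + 1))) at_top"
    using eventually_gt_at_top[of "0::nat"]
  proof eventually_elim
    case (elim n)
    have "Gamma_series z n = Gamma (real n + 1) * real n powr z / (Gamma (z + real (n + 1)) / Gamma z)"
      using elim Gamma_fact[of n, where 'a = real]
      by (simp add: Gamma_series_def powr_def pochhammer_Gamma[OF assms] add_ac)
    then show ?case using Gz by (simp add: field_simps add_ac)
  qed
  ultimately have "(\<lambda>n. real n powr z) \<sim>[at_top] (\<lambda>n. Gamma (real n + 1 + z) / Gamma (real n + 1))"
    by (intro asymp_equivI') (simp add: tendsto_cong)
  then show ?thesis by (rule asymp_equiv_symI)
qed

lemma Gamma_ratio_asymp_equiv_powr:
  fixes r :: real
  assumes "0 < r" "r < 1"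
  shows "(\<lambda>n. Gamma (real n + 1) / Gamma (real n + 1 - r)) \<sim>[at_top] (\<lambda>n. real n powr r)"
proof -
  have "- r \<notin> \<int>\<^sub>\<le>\<^sub>0"
  proof
    assume "- r \<in> \<int>\<^sub>\<le>\<^sub>0"
    then obtain n :: int where "- r = of_int n" by (elim nonpos_Ints_cases)
    with assms have "- 1 < real_of_int n" "real_of_int n < 0" by auto
    then show False by auto
  qed
  from asymp_equiv_inverse[OF Gamma_shift_ratio_asymp_equiv[OF this]]
  show ?thesis by (simp add: powr_minus)
qed

lemma const_smallo_mult_powr:
  fixes b c r :: real
  assumes "c \<noteq> 0" "r > 0"
  shows "(\<lambda>_. b) \<in> o[at_top](\<lambda>n::nat. c * real n powr r)"
proof (rule smalloI_tendsto)
  have "(\<lambda>n. b / c * real n powr - r) \<longlonglongrightarrow> b / c * 0"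
    using assms by (intro tendsto_mult tendsto_const tendsto_neg_powr filterlim_real_sequentially) auto
  moreover have "eventually (\<lambda>n. b / c * real n powr - r = b / (c * real n powr r)) at_top"
    using eventually_gt_at_top[of "0::nat"] by eventually_elim (simp add: powr_minus field_simps)
  ultimately show "(\<lambda>n. b / (c * real n powr r)) \<longlonglongrightarrow> 0"
    by (simp add: tendsto_cong)
  show "eventually (\<lambda>n. c * real n powr r \<noteq> 0) at_top"
    using eventually_gt_at_top[of "0::nat"] by eventually_elim (use assms in simp)
qed

lemma expected_active_bounds:
  assumes "a1 > 0"
  defines "s \<equiv> a1 + 1"
  defines "M \<equiv> \<lambda>D. Gamma (1 - 1 / s) * (Gamma (real D + 1) / Gamma (real D + 1 - 1 / s))"
  shows "expected_active a1 D \<in> {M D - 1..M D}"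
proof -
  have s: "s > 1" using assms by (simp add: s_def)
  define \<phi> where "\<phi> x = 1 - (1 - x) ^ D" for x :: real
  have "mono_on {0..1} \<phi>" by (auto intro!: mono_onI power_mono simp: \<phi>_def)
  moreover have "((\<lambda>x. \<phi> x * count_density s x) has_integral M D - 1) {0..1}"
    using has_integral_activation_count_density[OF s, of D] by (simp add: \<phi>_def M_def)
  ultimately have "M D - 1 \<le> (\<Sum>j. \<phi> (real (Suc j) powr - s))"
    "(\<Sum>j. \<phi> (real (Suc j) powr - s)) \<le> \<phi> 1 + (M D - 1)"
    using sum_powr_grid_integral_bounds(2,3)[of s \<phi>] s by (simp_all add: \<phi>_def [of 0])
  moreover have "expected_active a1 D = (\<Sum>j. \<phi> (real (Suc j) powr - s))"
    using assms by (simp add: expected_active_def prob_active_eq act_prob_def s_def \<phi>_def)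
  moreover have "\<phi> 1 \<le> 1" by (simp add: \<phi>_def)
  ultimately show ?thesis by auto
qed

theorem lemma1:
  fixes a1 :: real
  assumes "a1 > 0"
  shows "(\<lambda>D. expected_active a1 D) \<sim>[at_top]
           (\<lambda>D. Gamma (1 - 1 / (a1 + 1)) * real D powr (1 / (a1 + 1)))"
proof -
  define s where "s = a1 + 1"
  define c where "c = Gamma (1 - 1 / s)"
  define M where "M D = c * (Gamma (real D + 1) / Gamma (real D + 1 - 1 / s))" for D :: nat
  have s: "s > 1" using assms by (simp add: s_def)
  then have "c > 0" by (simp add: c_def)
  have "M \<sim>[at_top] (\<lambda>D. c * real D powr (1 / s))"
    unfolding M_def using s by (intro asymp_equiv_intros Gamma_ratio_asymp_equiv_powr) auto
  moreover have "(\<lambda>_. - 1) \<in> o[at_top](\<lambda>D. c * real D powr (1 / s))"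
    using s \<open>c > 0\<close> by (intro const_smallo_mult_powr) auto
  ultimately have "(\<lambda>D. M D - 1) \<sim>[at_top] (\<lambda>D. c * real D powr (1 / s))"
    using asymp_equiv_add_right[of "\<lambda>_. - 1" _ _ M] by simp
  moreover have "expected_active a1 D \<in> {M D - 1..M D}" for D
    using expected_active_bounds[OF assms] by (simp add: M_def c_def s_def)
  ultimately show ?thesis
    using \<open>M \<sim>[at_top] _\<close> asymp_equiv_sandwich_real[of "\<lambda>D. M D - 1" _ _ M]
    by (simp add: s_def c_def)
qed

end
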